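(* Let $(V_1,V_2)$ be a pair of commuting isometries on a Hilbert space $\mathcal H$ with $C(V_1,V_2)\ge0$ and $C(V_1,V_2)\neq0$, and let $V=V_1V_2$. Then there is a non-trivial (nonzero) Hilbert space $\mathcal L\subsetneq\ker V^*$ such that, up to unitary equivalence, $\mathcal H=\mathcal H_0\oplus\mathcal H_0^\perp$ with $\mathcal H_0=H^2_{\mathbb D^2}\otimes\mathcal L$, and in this decomposition $$V_i=\begin{pmatrix}M_{z_i}\otimes I_{\mathcal L}&0\\0&V_{i0}\end{pmatrix},\quad i=1,2,$$ where the defect operator $C(V_{10},V_{20})$ is zero. Moreover, the dimension of $\mathcal L$ is the same as the dimension of the range of $C(V_1,V_2)$.
   Context: Defect operator: $C(V_1,V_2)=I-V_1V_1^*-V_2V_2^*+V_1V_2V_2^*V_1^*$. $H^2_{\mathbb D^2}$ is the Hardy space of the bidisc and $M_{z_1},M_{z_2}$ are multiplication by the coordinate functions on it. *)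

theory Defs
  imports "HOL-Analysis.Analysis"
begin

class complex_vector = real_vector +
  fixes scaleC :: "complex \<Rightarrow> 'a \<Rightarrow> 'a"
  assumes scaleC_add_right: "scaleC a (x + y) = scaleC a x + scaleC a y"
    and scaleC_add_left: "scaleC (a + b) x = scaleC a x + scaleC b x"
    and scaleC_scaleC: "scaleC a (scaleC b x) = scaleC (a * b) x"
    and scaleC_one: "scaleC 1 x = x"
    and scaleR_scaleC: "scaleR r x = scaleC (complex_of_real r) x"

class complex_inner = complex_vector + real_normed_vector +
  fixes cinner :: "'a \<Rightarrow> 'a \<Rightarrow> complex"
  assumes cinner_commute: "cinner x y = cnj (cinner y x)"
    and cinner_add_right: "cinner x (y + z) = cinner x y + cinner x z"
    and cinner_scaleC_right: "cinner x (scaleC c y) = c * cinner x y"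
    and cinner_nonneg: "0 \<le> Re (cinner x x)"
    and cinner_eq_zero_iff: "cinner x x = 0 \<longleftrightarrow> x = 0"
    and norm_eq_sqrt_cinner: "norm x = sqrt (Re (cinner x x))"

class chilbert_space = complex_inner + complete_space

definition bounded_clinear :: "('a::complex_inner \<Rightarrow> 'b::complex_inner) \<Rightarrow> bool" where
  "bounded_clinear T \<longleftrightarrow> (\<forall>x y. T (x + y) = T x + T y) \<and> (\<forall>c x. T (scaleC c x) = scaleC c (T x))
     \<and> (\<exists>K. \<forall>x. norm (T x) \<le> norm x * K)"

definition adj :: "('a::complex_inner \<Rightarrow> 'a) \<Rightarrow> ('a \<Rightarrow> 'a)" where
  "adj T = (SOME S. \<forall>x y. cinner (S x) y = cinner x (T y))"

definition isometry :: "('a::complex_inner \<Rightarrow> 'a) \<Rightarrow> bool" where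
  "isometry V \<longleftrightarrow> bounded_clinear V \<and> (\<forall>x. norm (V x) = norm x)"

definition positive_op :: "('a::complex_inner \<Rightarrow> 'a) \<Rightarrow> bool" where
  "positive_op T \<longleftrightarrow> (\<forall>x. 0 \<le> Re (cinner x (T x)) \<and> Im (cinner x (T x)) = 0)"

definition defect :: "('a::complex_inner \<Rightarrow> 'a) \<Rightarrow> ('a \<Rightarrow> 'a) \<Rightarrow> 'a \<Rightarrow> 'a" where
  "defect V1 V2 = (\<lambda>x. x - V1 (adj V1 x) - V2 (adj V2 x) + V1 (V2 (adj V2 (adj V1 x))))"

text \<open>Adjoint of (the restriction to S of) an operator leaving the closed subspace S invariant,
  computed in the Hilbert space S; only its values on S are meaningful.\<close>
definition adj_on :: "'a::complex_inner set \<Rightarrow> ('a \<Rightarrow> 'a) \<Rightarrow> ('a \<Rightarrow> 'a)" where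
  "adj_on S T = (SOME A. (\<forall>x\<in>S. A x \<in> S) \<and> (\<forall>x\<in>S. \<forall>y\<in>S. cinner (A x) y = cinner x (T y)))"

definition defect_on :: "'a::complex_inner set \<Rightarrow> ('a \<Rightarrow> 'a) \<Rightarrow> ('a \<Rightarrow> 'a) \<Rightarrow> 'a \<Rightarrow> 'a" where
  "defect_on S V1 V2 = (\<lambda>x. x - V1 (adj_on S V1 x) - V2 (adj_on S V2 x)
                               + V1 (V2 (adj_on S V2 (adj_on S V1 x))))"

definition csubspace :: "'a::complex_vector set \<Rightarrow> bool" where
  "csubspace S \<longleftrightarrow> 0 \<in> S \<and> (\<forall>x\<in>S. \<forall>y\<in>S. x + y \<in> S) \<and> (\<forall>c. \<forall>x\<in>S. scaleC c x \<in> S)"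

definition closed_csubspace :: "'a::{complex_vector,topological_space} set \<Rightarrow> bool" where
  "closed_csubspace S \<longleftrightarrow> csubspace S \<and> closed S"

definition orth_compl :: "'a::complex_inner set \<Rightarrow> 'a set" where
  "orth_compl S = {y. \<forall>x\<in>S. cinner x y = 0}"

definition cspan :: "'a::complex_vector set \<Rightarrow> 'a set" where
  "cspan B = {x. \<exists>F c. finite F \<and> F \<subseteq> B \<and> x = (\<Sum>b\<in>F. scaleC (c b) b)}"

definition orthonormal :: "'a::complex_inner set \<Rightarrow> bool" where
  "orthonormal B \<longleftrightarrow> (\<forall>b\<in>B. norm b = 1) \<and> (\<forall>b\<in>B. \<forall>b'\<in>B. b \<noteq> b' \<longrightarrow> cinner b b' = 0)"

definition is_onb :: "'a::complex_inner set \<Rightarrow> 'a set \<Rightarrow> bool" where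
  "is_onb S B \<longleftrightarrow> B \<subseteq> S \<and> orthonormal B \<and> closure (cspan B) = S"

definition same_hilbert_dim :: "'a::complex_inner set \<Rightarrow> 'a set \<Rightarrow> bool" where
  "same_hilbert_dim S T \<longleftrightarrow> (\<exists>B1 B2 f. is_onb S B1 \<and> is_onb T B2 \<and> bij_betw f B1 B2)"

text \<open>H^2(D^2) \<otimes> L, realised (via Taylor coefficients, unitarily) as the L-valued
  square-summable families indexed by N x N; coefficient (m,n) is that of z1^m z2^n.\<close>
definition hardy2_L :: "'a::complex_inner set \<Rightarrow> (nat \<times> nat \<Rightarrow> 'a) set" where
  "hardy2_L L = {f. (\<forall>k. f k \<in> L) \<and> (\<lambda>k. (norm (f k))\<^sup>2) summable_on UNIV}"

definition Mz1 :: "(nat \<times> nat \<Rightarrow> 'a::zero) \<Rightarrow> (nat \<times> nat \<Rightarrow> 'a)" where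
  "Mz1 f = (\<lambda>(m, n). if m = 0 then 0 else f (m - 1, n))"

definition Mz2 :: "(nat \<times> nat \<Rightarrow> 'a::zero) \<Rightarrow> (nat \<times> nat \<Rightarrow> 'a)" where
  "Mz2 f = (\<lambda>(m, n). if n = 0 then 0 else f (m, n - 1))"

definition unitary_onto_hardy :: "'a::complex_inner set \<Rightarrow> 'a set \<Rightarrow> ('a \<Rightarrow> nat \<times> nat \<Rightarrow> 'a) \<Rightarrow> bool" where
  "unitary_onto_hardy H0 L U \<longleftrightarrow>
     bij_betw U H0 (hardy2_L L) \<and>
     (\<forall>x\<in>H0. \<forall>y\<in>H0. U (x + y) = (\<lambda>k. U x k + U y k)) \<and>
     (\<forall>c. \<forall>x\<in>H0. U (scaleC c x) = (\<lambda>k. scaleC c (U x k))) \<and>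
     (\<forall>x\<in>H0. (norm x)\<^sup>2 = infsum (\<lambda>k. (norm (U x k))\<^sup>2) UNIV)"

end

(* The defect operator is C = R - V1 R V1^* , a difference of two orthogonal projections,
   where R = I - V2 V2^* projects onto ker V2^* . Positivity of such a difference forces the
   range of the second into the range of the first, so C is itself an orthogonal projection,
   its range L is annihilated by V1^* and V2^* , and V1 maps ker V2^* into itself (symmetrically
   for V2). Hence the subspaces V1^m V2^n L are mutually orthogonal isometric copies of L, and
   x |-> (P_L V2^*n V1^*m x)_(m,n) is a unitary from their closed span H0 onto the L-valued
   Hardy space of the bidisc that intertwines V1, V2 with M_z1, M_z2. H0 reduces both
   isometries, and its orthocomplement is orthogonal to L = ran C, so C vanishes there. *)

theory Submission
  imports Defs
begin

interpretation complex_vector: module "scaleC :: complex \<Rightarrow> 'a \<Rightarrow> 'a::complex_vector"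
  rewrites "module.subspace scaleC = (csubspace :: 'a set \<Rightarrow> bool)"
    and "module.span scaleC = (cspan :: 'a set \<Rightarrow> 'a set)"
proof -
  show *: "module (scaleC :: complex \<Rightarrow> 'a \<Rightarrow> 'a)"
    by unfold_locales (simp_all add: scaleC_add_right scaleC_add_left scaleC_scaleC scaleC_one)
  show "module.subspace scaleC = (csubspace :: 'a set \<Rightarrow> bool)"
    by (simp add: fun_eq_iff module.subspace_def[OF *] csubspace_def)
  show "module.span scaleC = (cspan :: 'a set \<Rightarrow> 'a set)"
    by (auto simp: fun_eq_iff module.span_explicit[OF *] cspan_def)
qed

lemma cinner_add_left: "cinner (x + y) z = cinner x z + cinner (y::'a::complex_inner) z"
  by (metis cinner_add_right cinner_commute complex_cnj_add)

lemma cinner_scaleC_left: "cinner (scaleC c x) (y::'a::complex_inner) = cnj c * cinner x y"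
  by (metis cinner_commute cinner_scaleC_right complex_cnj_mult)

lemma additive_cinner_right: "Modules.additive (cinner (x::'a::complex_inner))"
  by unfold_locales (rule cinner_add_right)

lemma additive_cinner_left: "Modules.additive (\<lambda>y::'a::complex_inner. cinner y x)"
  by unfold_locales (rule cinner_add_left)

lemmas cinner_zero_right [simp] = Modules.additive.zero [OF additive_cinner_right]
  and cinner_diff_right = Modules.additive.diff [OF additive_cinner_right]
  and cinner_minus_right = Modules.additive.minus [OF additive_cinner_right]
  and cinner_sum_right = Modules.additive.sum [OF additive_cinner_right]

lemmas cinner_zero_left [simp] = Modules.additive.zero [OF additive_cinner_left]
  and cinner_diff_left = Modules.additive.diff [OF additive_cinner_left]
  and cinner_sum_left = Modules.additive.sum [OF additive_cinner_left]

lemma cinner_zero_commute: "cinner x y = 0 \<longleftrightarrow> cinner y (x::'a::complex_inner) = 0"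
  by (metis cinner_commute complex_cnj_zero_iff)

lemma cinner_self: "cinner x x = complex_of_real ((norm (x::'a::complex_inner))\<^sup>2)"
proof -
  have "Im (cinner x x) = 0"
    using arg_cong[OF cinner_commute[of x x], of Im] by simp
  moreover have "Re (cinner x x) = (norm x)\<^sup>2"
    using norm_eq_sqrt_cinner[of x] cinner_nonneg[of x] by simp
  ultimately show ?thesis by (simp add: complex_eq_iff)
qed

lemma power2_norm_eq_cinner: "(norm x)\<^sup>2 = Re (cinner x (x::'a::complex_inner))"
  by (simp add: cinner_self)

lemma cinner_ext: "(\<And>y. cinner a y = cinner b (y::'a::complex_inner)) \<Longrightarrow> a = b"
  by (metis cinner_diff_left cinner_eq_zero_iff right_minus_eq)

lemma csubspace_cinner_ext:
  assumes "csubspace S" "a \<in> S" "b \<in> S"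
    and "\<And>y. y \<in> S \<Longrightarrow> cinner y a = cinner y (b::'a::complex_inner)"
  shows "a = b"
proof -
  have "a - b \<in> S" using assms(1-3) by (rule complex_vector.subspace_diff)
  then have "cinner (a - b) (a - b) = 0" using assms(4) by (simp add: cinner_diff_right)
  then show ?thesis by (simp add: cinner_eq_zero_iff)
qed

lemma power2_norm_add:
  "(norm (x + y))\<^sup>2 = (norm x)\<^sup>2 + 2 * Re (cinner x y) + (norm (y::'a::complex_inner))\<^sup>2"
proof -
  have "Re (cinner y x) = Re (cinner x y)" by (subst cinner_commute) simp
  then show ?thesis by (simp add: power2_norm_eq_cinner cinner_add_left cinner_add_right)
qed

lemma power2_norm_diff:
  "(norm (x - y))\<^sup>2 = (norm x)\<^sup>2 - 2 * Re (cinner x y) + (norm (y::'a::complex_inner))\<^sup>2"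
proof -
  have "Re (cinner y x) = Re (cinner x y)" by (subst cinner_commute) simp
  then show ?thesis by (simp add: power2_norm_eq_cinner cinner_diff_left cinner_diff_right)
qed

lemma norm_scaleC: "norm (scaleC c (x::'a::complex_inner)) = cmod c * norm x"
proof -
  have "(norm (scaleC c x))\<^sup>2 = Re (c * (cnj c * cinner x x))"
    by (simp only: power2_norm_eq_cinner cinner_scaleC_left cinner_scaleC_right)
  also have "c * (cnj c * cinner x x) = complex_of_real ((cmod c)\<^sup>2) * cinner x x"
    by (metis complex_norm_square mult.assoc mult.commute)
  also have "Re (complex_of_real ((cmod c)\<^sup>2) * cinner x x) = (cmod c * norm x)\<^sup>2"
    by (simp add: cinner_self power_mult_distrib)
  finally show ?thesis by (simp add: power2_eq_iff_nonneg)
qed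

lemma Cauchy_Schwarz_cinner: "cmod (cinner x y) \<le> norm x * norm (y::'a::complex_inner)"
proof (cases "x = 0")
  case False
  define t where "t = cinner x y / cinner x x"
  have xx: "cinner x x \<noteq> 0" using False cinner_eq_zero_iff by blast
  have "cinner (scaleC t x) (y - scaleC t x) = 0"
    using xx by (simp add: t_def cinner_diff_right cinner_scaleC_left cinner_scaleC_right)
  then have "cinner (y - scaleC t x) (scaleC t x) = 0"
    by (simp add: cinner_zero_commute)
  then have "(norm y)\<^sup>2 = (norm (y - scaleC t x))\<^sup>2 + (norm (scaleC t x))\<^sup>2"
    using power2_norm_add[of "y - scaleC t x" "scaleC t x"] by simp
  then have "(cmod t * norm x)\<^sup>2 \<le> (norm y)\<^sup>2" by (simp add: norm_scaleC)
  moreover have "cmod t * norm x = cmod (cinner x y) / norm x"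
    using False by (simp add: t_def cinner_self norm_divide norm_power) (simp add: power2_eq_square)
  ultimately have "cmod (cinner x y) / norm x \<le> norm y"
    by (simp add: power2_le_iff_abs_le)
  then show ?thesis using False by (simp add: field_simps mult.commute)
qed simp

lemma bounded_linear_cinner_right: "bounded_linear (cinner (x::'a::complex_inner))"
proof (rule bounded_linear_intro[where K="norm x"])
  show "cinner x (y + z) = cinner x y + cinner x z" for y z by (rule cinner_add_right)
  show "cinner x (r *\<^sub>R y) = r *\<^sub>R cinner x y" for r y
    by (simp add: scaleR_scaleC cinner_scaleC_right scaleR_conv_of_real)
  show "norm (cinner x y) \<le> norm y * norm x" for y
    using Cauchy_Schwarz_cinner[of x y] by (simp add: mult.commute)
qed

lemma bounded_linear_scaleC_right: "bounded_linear (scaleC c :: 'a::complex_inner \<Rightarrow> 'a)"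
proof (rule bounded_linear_intro[where K="cmod c"])
  show "scaleC c (x + y) = scaleC c x + scaleC c y" for x y :: 'a by (rule scaleC_add_right)
  show "scaleC c (r *\<^sub>R x) = r *\<^sub>R scaleC c x" for r and x :: 'a
    by (simp add: scaleR_scaleC scaleC_scaleC mult.commute)
  show "norm (scaleC c x) \<le> norm x * cmod c" for x :: 'a by (simp add: norm_scaleC)
qed

lemma csubspace_convex: "csubspace S \<Longrightarrow> convex S"
  unfolding convex_def by (simp add: scaleR_scaleC complex_vector.subspace_add complex_vector.subspace_scale)

section \<open>Orthogonal decomposition and the Riesz representation\<close>

lemma minimizing_sequence_Cauchy:
  fixes m :: "nat \<Rightarrow> 'a::complex_inner"
  assumes "convex M" and m: "\<And>n. m n \<in> M"
    and lower: "\<And>q. q \<in> M \<Longrightarrow> \<delta> \<le> (norm (x - q))\<^sup>2"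
    and approx: "\<And>n. (norm (x - m n))\<^sup>2 < \<delta> + inverse (real (Suc n))"
  shows "Cauchy m"
proof (rule metric_CauchyI)
  have close: "(norm (m i - m j))\<^sup>2 < 2 * inverse (real (Suc i)) + 2 * inverse (real (Suc j))" for i j
  proof -
    define mid where "mid = (1/2::real) *\<^sub>R m i + (1/2::real) *\<^sub>R m j"
    have "mid \<in> M" unfolding mid_def by (rule convexD[OF \<open>convex M\<close> m m]) auto
    then have "\<delta> \<le> (norm (x - mid))\<^sup>2" by (rule lower)
    moreover have "(x - m j) + (x - m i) = 2 *\<^sub>R (x - mid)" and "(x - m j) - (x - m i) = m i - m j"
      unfolding mid_def by (simp_all add: algebra_simps scaleR_2)
    then have "(norm (m i - m j))\<^sup>2 = 2 * (norm (x - m j))\<^sup>2 + 2 * (norm (x - m i))\<^sup>2 - 4 * (norm (x - mid))\<^sup>2"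
      using power2_norm_add[of "x - m j" "x - m i"] power2_norm_diff[of "x - m j" "x - m i"]
      by (simp add: power_mult_distrib)
    ultimately show ?thesis using approx[of i] approx[of j] by linarith
  qed
  fix e :: real assume "0 < e"
  obtain N :: nat where N: "4 / e\<^sup>2 < real N" using reals_Archimedean2 by blast
  have "0 < real N" using N \<open>0 < e\<close> by (smt (verit) divide_pos_pos zero_less_power)
  then have "4 * inverse (real N) < e\<^sup>2" using N \<open>0 < e\<close> by (simp add: field_simps)
  have "dist (m i) (m j) < e" if "N \<le> i" "N \<le> j" for i j
  proof -
    have "inverse (real (Suc i)) \<le> inverse (real N)" "inverse (real (Suc j)) \<le> inverse (real N)"
      using that \<open>0 < real N\<close> by (auto intro!: le_imp_inverse_le)
    then have "(dist (m i) (m j))\<^sup>2 < e\<^sup>2"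
      using close[of i j] \<open>4 * inverse (real N) < e\<^sup>2\<close> by (simp add: dist_norm)
    then show ?thesis using \<open>0 < e\<close> by (simp add: power2_less_imp_less)
  qed
  then show "\<exists>N. \<forall>i\<ge>N. \<forall>j\<ge>N. dist (m i) (m j) < e" by blast
qed

lemma closest_point_exists:
  fixes M :: "'a::chilbert_space set"
  assumes "closed M" "convex M" "M \<noteq> {}"
  shows "\<exists>p\<in>M. \<forall>q\<in>M. norm (x - p) \<le> norm (x - q)"
proof -
  define D where "D = (\<lambda>q. (norm (x - q))\<^sup>2) ` M"
  have "bdd_below D" unfolding D_def by (rule bdd_belowI[where m=0]) auto
  then have lower: "Inf D \<le> (norm (x - q))\<^sup>2" if "q \<in> M" for q
    using that by (auto simp: D_def intro!: cInf_lower)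
  have "\<exists>q\<in>M. (norm (x - q))\<^sup>2 < Inf D + inverse (real (Suc n))" for n
    using cInf_lessD[of D "Inf D + inverse (real (Suc n))"] \<open>M \<noteq> {}\<close> by (auto simp: D_def)
  then obtain m where m: "\<And>n. m n \<in> M"
    and approx: "\<And>n. (norm (x - m n))\<^sup>2 < Inf D + inverse (real (Suc n))"
    by metis
  have "Cauchy m" by (rule minimizing_sequence_Cauchy[OF \<open>convex M\<close> m lower approx])
  then obtain p where "m \<longlonglongrightarrow> p" using Cauchy_convergent_iff convergent_def by blast
  have "p \<in> M" by (rule closed_sequentially[OF \<open>closed M\<close> m \<open>m \<longlonglongrightarrow> p\<close>])
  have "(\<lambda>n. (norm (x - m n))\<^sup>2) \<longlonglongrightarrow> (norm (x - p))\<^sup>2"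
    by (intro tendsto_intros \<open>m \<longlonglongrightarrow> p\<close>)
  moreover have "(\<lambda>n. Inf D + inverse (real (Suc n))) \<longlonglongrightarrow> Inf D + 0"
    by (intro tendsto_intros LIMSEQ_inverse_real_of_nat)
  ultimately have "(norm (x - p))\<^sup>2 \<le> Inf D + 0"
    by (rule LIMSEQ_le) (use approx less_imp_le in blast)
  then have "norm (x - p) \<le> norm (x - q)" if "q \<in> M" for q
    using lower[OF that] by (smt (verit) norm_ge_zero power2_le_imp_le)
  with \<open>p \<in> M\<close> show ?thesis by blast
qed

lemma orth_compl_closed_csubspace: "closed_csubspace (orth_compl (S::'a::complex_inner set))"
proof -
  have "orth_compl S = (\<Inter>s\<in>S. {y. cinner s y = 0})" unfolding orth_compl_def by auto
  moreover have "closed {y. cinner s y = 0}" for s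
    by (rule closed_Collect_eq) (auto intro: linear_continuous_on bounded_linear_cinner_right)
  ultimately have "closed (orth_compl S)" by auto
  moreover have "csubspace (orth_compl S)"
    unfolding csubspace_def orth_compl_def by (simp add: cinner_add_right cinner_scaleC_right)
  ultimately show ?thesis by (simp add: closed_csubspace_def)
qed

lemma subset_orth_compl_orth_compl: "S \<subseteq> orth_compl (orth_compl (S::'a::complex_inner set))"
  unfolding orth_compl_def by (auto intro: cinner_zero_commute[THEN iffD1])

lemma orth_compl_Int: "x \<in> S \<Longrightarrow> x \<in> orth_compl S \<Longrightarrow> x = 0"
  unfolding orth_compl_def using cinner_eq_zero_iff by blast

lemma closest_point_orthogonal:
  fixes M :: "'a::complex_inner set"
  assumes M: "csubspace M" and "p \<in> M" "y \<in> M"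
    and closest: "\<And>q. q \<in> M \<Longrightarrow> norm (x - p) \<le> norm (x - q)"
  shows "cinner y (x - p) = 0"
proof (rule ccontr)
  define w where "w = cinner (x - p) y"
  define t where "t = 1 / ((norm y)\<^sup>2 + 1)"
  define s where "s = complex_of_real t * cnj w"
  assume "cinner y (x - p) \<noteq> 0"
  then have "0 < (cmod w)\<^sup>2" using cinner_zero_commute[of y "x - p"] by (simp add: w_def)
  have "0 < t" by (simp add: t_def add_nonneg_pos)
  have re: "Re (cinner (x - p) (scaleC s y)) = t * (cmod w)\<^sup>2"
    unfolding s_def cinner_scaleC_right w_def[symmetric] mult.assoc
    by (simp flip: complex_norm_square add: mult.commute)
  have nm: "norm (scaleC s y) = t * cmod w * norm y"
    using \<open>0 < t\<close> by (simp add: s_def norm_scaleC norm_mult)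
  have "p + scaleC s y \<in> M"
    using M \<open>p \<in> M\<close> \<open>y \<in> M\<close> by (simp add: complex_vector.subspace_add complex_vector.subspace_scale)
  then have "norm (x - p) \<le> norm ((x - p) - scaleC s y)"
    using closest by (simp add: algebra_simps)
  then have "(norm (x - p))\<^sup>2 \<le> (norm ((x - p) - scaleC s y))\<^sup>2"
    by (simp add: power_mono)
  also have "\<dots> = (norm (x - p))\<^sup>2 - 2 * (t * (cmod w)\<^sup>2) + (t * cmod w * norm y)\<^sup>2"
    by (simp only: power2_norm_diff re nm)
  finally have "t * (2 * (cmod w)\<^sup>2) \<le> t * (t * (norm y)\<^sup>2 * (cmod w)\<^sup>2)"
    by (simp add: power_mult_distrib power2_eq_square algebra_simps)
  then have "2 * (cmod w)\<^sup>2 \<le> t * (norm y)\<^sup>2 * (cmod w)\<^sup>2"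
    using \<open>0 < t\<close> by simp
  moreover have "t * (norm y)\<^sup>2 < 1"
    by (simp add: t_def field_simps add_pos_nonneg)
  ultimately show False
    using \<open>0 < (cmod w)\<^sup>2\<close> mult_strict_right_mono[of "t * (norm y)\<^sup>2" 1 "(cmod w)\<^sup>2"] by linarith
qed

lemma orthogonal_decomposition:
  fixes M :: "'a::chilbert_space set"
  assumes "closed_csubspace M"
  shows "\<exists>p\<in>M. x - p \<in> orth_compl M"
proof -
  have M: "csubspace M" "closed M" using assms by (auto simp: closed_csubspace_def)
  moreover have "M \<noteq> {}" using M complex_vector.subspace_0 by blast
  ultimately obtain p where p: "p \<in> M" and closest: "\<And>q. q \<in> M \<Longrightarrow> norm (x - p) \<le> norm (x - q)"
    using closest_point_exists[of M x] csubspace_convex by blast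
  have "cinner y (x - p) = 0" if "y \<in> M" for y
    by (rule closest_point_orthogonal[OF M(1) p that closest])
  then show ?thesis using p by (auto simp: orth_compl_def)
qed

lemma closed_csubspace_kernel:
  fixes f :: "'a::complex_inner \<Rightarrow> complex"
  assumes add: "\<And>x y. f (x + y) = f x + f y"
    and scale: "\<And>c x. f (scaleC c x) = c * f x"
    and bound: "\<And>x. cmod (f x) \<le> norm x * K"
  shows "closed_csubspace {y. f y = 0}"
proof -
  have "bounded_linear f"
  proof (rule bounded_linear_intro[where K=K])
    show "f (x + y) = f x + f y" for x y by (rule add)
    show "f (r *\<^sub>R x) = r *\<^sub>R f x" for r x by (simp add: scaleR_scaleC scale scaleR_conv_of_real)
    show "norm (f x) \<le> norm x * K" for x using bound by simp
  qed
  then have "closed {y. f y = 0}"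
    by (intro closed_Collect_eq) (auto intro: linear_continuous_on)
  moreover have "f 0 = 0" using scale[of 0 0] by simp
  then have "csubspace {y. f y = 0}" unfolding csubspace_def by (simp add: add scale)
  ultimately show ?thesis by (simp add: closed_csubspace_def)
qed

lemma riesz_representation:
  fixes f :: "'a::chilbert_space \<Rightarrow> complex"
  assumes add: "\<And>x y. f (x + y) = f x + f y"
    and scale: "\<And>c x. f (scaleC c x) = c * f x"
    and bound: "\<And>x. cmod (f x) \<le> norm x * K"
  shows "\<exists>z. \<forall>y. cinner z y = f y"
proof (cases "\<forall>y. f y = 0")
  case True
  then show ?thesis by (intro exI[of _ 0]) simp
next
  case False
  then obtain y0 where "f y0 \<noteq> 0" by blast
  interpret f: Modules.additive f by unfold_locales (rule add)
  define N where "N = {y. f y = 0}"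
  have "closed_csubspace N"
    unfolding N_def using add scale bound by (rule closed_csubspace_kernel)
  then obtain p where "p \<in> N" and "y0 - p \<in> orth_compl N"
    using orthogonal_decomposition by blast
  define w where "w = y0 - p"
  have "f w = f y0" using \<open>p \<in> N\<close> by (simp add: w_def f.diff N_def)
  then have "cinner w w \<noteq> 0" using \<open>f y0 \<noteq> 0\<close> by (auto simp: cinner_eq_zero_iff f.zero)
  have "cinner (scaleC (cnj (f w / cinner w w)) w) y = f y" for y
  proof -
    have "y - scaleC (f y / f w) w \<in> N"
      using \<open>f w = f y0\<close> \<open>f y0 \<noteq> 0\<close> by (simp add: N_def f.diff scale)
    then have "cinner (y - scaleC (f y / f w) w) w = 0"
      using \<open>y0 - p \<in> orth_compl N\<close> by (simp add: w_def orth_compl_def)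
    then have "cinner w (y - scaleC (f y / f w) w) = 0"
      by (simp add: cinner_zero_commute)
    then have "cinner w y = (f y / f w) * cinner w w"
      by (simp add: cinner_diff_right cinner_scaleC_right)
    then show ?thesis
      using \<open>cinner w w \<noteq> 0\<close> \<open>f w = f y0\<close> \<open>f y0 \<noteq> 0\<close> by (simp add: cinner_scaleC_left)
  qed
  then show ?thesis by blast
qed

lemma bounded_clinear_additive: "bounded_clinear T \<Longrightarrow> Modules.additive T"
  unfolding bounded_clinear_def by unfold_locales blast

lemmas bounded_clinear_zero = Modules.additive.zero [OF bounded_clinear_additive]
  and bounded_clinear_diff = Modules.additive.diff [OF bounded_clinear_additive]

lemma bounded_clinear_add: "bounded_clinear T \<Longrightarrow> T (x + y) = T x + T y"
  unfolding bounded_clinear_def by blast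

lemma bounded_clinear_scaleC: "bounded_clinear T \<Longrightarrow> T (scaleC c x) = scaleC c (T x)"
  unfolding bounded_clinear_def by blast

lemma bounded_clinear_bound: "bounded_clinear T \<Longrightarrow> \<exists>K>0. \<forall>x. norm (T x) \<le> norm x * K"
proof -
  assume "bounded_clinear T"
  then obtain K where K: "\<And>x. norm (T x) \<le> norm x * K" unfolding bounded_clinear_def by blast
  have "norm (T x) \<le> norm x * (\<bar>K\<bar> + 1)" for x
  proof -
    have "norm x * K \<le> norm x * (\<bar>K\<bar> + 1)" by (rule mult_left_mono) auto
    then show ?thesis using K[of x] by linarith
  qed
  then show ?thesis by (intro exI[of _ "\<bar>K\<bar> + 1"]) auto
qed

lemma bounded_clinear_bounded_linear: "bounded_clinear T \<Longrightarrow> bounded_linear T"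
  unfolding bounded_clinear_def
  by (metis bounded_linear_intro scaleR_scaleC)

lemma bounded_clinear_compose:
  assumes S: "bounded_clinear S" and T: "bounded_clinear T"
  shows "bounded_clinear (\<lambda>x. S (T x))"
proof -
  obtain K1 where "K1 > 0" and K1: "\<And>x. norm (S x) \<le> norm x * K1" using bounded_clinear_bound[OF S] by blast
  obtain K2 where K2: "\<And>x. norm (T x) \<le> norm x * K2" using bounded_clinear_bound[OF T] by blast
  have "norm (S (T x)) \<le> norm x * (K2 * K1)" for x
  proof -
    have "norm (S (T x)) \<le> norm (T x) * K1" by (rule K1)
    also have "\<dots> \<le> norm x * K2 * K1" using K2[of x] \<open>K1 > 0\<close> by (simp add: mult_right_mono)
    finally show ?thesis by (simp add: mult.assoc)
  qed
  then show ?thesis using S T unfolding bounded_clinear_def by auto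
qed

lemma bounded_clinear_funpow:
  fixes T :: "'a::complex_inner \<Rightarrow> 'a"
  shows "bounded_clinear T \<Longrightarrow> bounded_clinear (T ^^ n)"
proof (induction n)
  case 0
  show ?case unfolding bounded_clinear_def by (auto intro!: exI[of _ 1])
next
  case (Suc n)
  then show ?case using bounded_clinear_compose[of T "T ^^ n"] by simp
qed

lemma adj_exists:
  fixes T :: "'a::chilbert_space \<Rightarrow> 'a"
  assumes T: "bounded_clinear T"
  shows "\<exists>S. \<forall>x y. cinner (S x) y = cinner x (T y)"
proof -
  obtain K where K: "\<And>x. norm (T x) \<le> norm x * K" using bounded_clinear_bound[OF T] by blast
  have "\<exists>z. \<forall>y. cinner z y = cinner x (T y)" for x
  proof (rule riesz_representation[where K="norm x * K"])
    show "cinner x (T (a + b)) = cinner x (T a) + cinner x (T b)" for a b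
      using T by (simp add: bounded_clinear_add cinner_add_right)
    show "cinner x (T (scaleC c a)) = c * cinner x (T a)" for c a
      using T by (simp add: bounded_clinear_scaleC cinner_scaleC_right)
    show "cmod (cinner x (T y)) \<le> norm y * (norm x * K)" for y
      using Cauchy_Schwarz_cinner[of x "T y"] mult_left_mono[OF K[of y], of "norm x"]
      by (simp add: algebra_simps)
  qed
  then show ?thesis by metis
qed

lemma cinner_adj_left:
  fixes T :: "'a::chilbert_space \<Rightarrow> 'a"
  assumes "bounded_clinear T"
  shows "cinner (adj T x) y = cinner x (T y)"
  using someI_ex[OF adj_exists[OF assms]] unfolding adj_def by blast

lemma cinner_adj_right:
  fixes T :: "'a::chilbert_space \<Rightarrow> 'a"
  assumes "bounded_clinear T"
  shows "cinner y (adj T x) = cinner (T y) x"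
  by (metis assms cinner_adj_left cinner_commute)

lemma bounded_clinear_adj:
  fixes T :: "'a::chilbert_space \<Rightarrow> 'a"
  assumes T: "bounded_clinear T"
  shows "bounded_clinear (adj T)"
proof -
  obtain K where "K > 0" and K: "\<And>x. norm (T x) \<le> norm x * K" using bounded_clinear_bound[OF T] by blast
  have "norm (adj T x) \<le> norm x * K" for x
  proof -
    have "(norm (adj T x))\<^sup>2 = Re (cinner x (T (adj T x)))"
      by (simp add: power2_norm_eq_cinner cinner_adj_left[OF T])
    also have "\<dots> \<le> norm x * norm (T (adj T x))"
      using complex_Re_le_cmod Cauchy_Schwarz_cinner order_trans by blast
    also have "\<dots> \<le> norm (adj T x) * (norm x * K)"
      using mult_left_mono[OF K[of "adj T x"], of "norm x"] by (simp add: algebra_simps)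
    finally show ?thesis using \<open>K > 0\<close>
      by (cases "adj T x = 0") (simp_all add: power2_eq_square)
  qed
  moreover have "adj T (x + y) = adj T x + adj T y" for x y
    by (rule cinner_ext) (simp add: cinner_adj_left[OF T] cinner_add_left)
  moreover have "adj T (scaleC c x) = scaleC c (adj T x)" for c x
    by (rule cinner_ext) (simp add: cinner_adj_left[OF T] cinner_scaleC_left)
  ultimately show ?thesis unfolding bounded_clinear_def by blast
qed

lemma adj_compose:
  fixes S T :: "'a::chilbert_space \<Rightarrow> 'a"
  assumes "bounded_clinear S" "bounded_clinear T"
  shows "adj (S \<circ> T) x = adj T (adj S x)"
proof (rule cinner_ext)
  have "bounded_clinear (S \<circ> T)"
    using bounded_clinear_compose[OF assms] by (simp add: comp_def)
  then show "cinner (adj (S \<circ> T) x) y = cinner (adj T (adj S x)) y" for y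
    by (simp add: cinner_adj_left assms)
qed

lemma adj_commute:
  fixes A B :: "'a::chilbert_space \<Rightarrow> 'a"
  assumes "bounded_clinear A" "bounded_clinear B" and "\<And>u. A (B u) = B (A u)"
  shows "adj A (adj B x) = adj B (adj A x)"
  by (rule cinner_ext) (simp add: cinner_adj_left assms bounded_clinear_adj)

lemma cinner_funpow_adj:
  fixes T :: "'a::chilbert_space \<Rightarrow> 'a"
  assumes T: "bounded_clinear T"
  shows "cinner ((T ^^ m) v) x = cinner v ((adj T ^^ m) x)"
proof (induction m arbitrary: x)
  case (Suc m)
  have "cinner ((T ^^ Suc m) v) x = cinner ((T ^^ m) v) (adj T x)"
    by (simp add: cinner_adj_right[OF T])
  also have "\<dots> = cinner v ((adj T ^^ Suc m) x)"
    by (simp add: Suc funpow_Suc_right del: funpow.simps)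
  finally show ?case .
qed simp

lemma isometry_bounded_clinear: "isometry V \<Longrightarrow> bounded_clinear V"
  unfolding isometry_def by blast

lemma isometry_cinner:
  assumes "isometry V"
  shows "cinner (V x) (V y) = cinner x (y::'a::complex_inner)"
proof -
  have V: "bounded_clinear V" and norm: "\<And>x. norm (V x) = norm x"
    using assms unfolding isometry_def by auto
  have re: "Re (cinner (V a) (V b)) = Re (cinner a b)" for a b
    using power2_norm_add[of "V a" "V b"] power2_norm_add[of a b]
    by (simp add: norm bounded_clinear_add[OF V, symmetric])
  have "Im (cinner (V x) (V y)) = Re (cinner (V x) (V (scaleC (- \<i>) y)))"
    by (simp only: bounded_clinear_scaleC[OF V] cinner_scaleC_right) simp
  also have "\<dots> = Im (cinner x y)" by (simp only: re cinner_scaleC_right) simp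
  finally show ?thesis using re[of x y] by (simp add: complex_eq_iff)
qed

lemma adj_isometry_cancel:
  fixes V :: "'a::chilbert_space \<Rightarrow> 'a"
  assumes "isometry V"
  shows "adj V (V x) = x"
  by (rule cinner_ext) (simp add: cinner_adj_left isometry_bounded_clinear assms isometry_cinner)

lemma norm_funpow_isometry: "isometry V \<Longrightarrow> norm ((V ^^ n) x) = norm x"
  by (induction n) (simp_all add: isometry_def)

lemma norm_sum_orthogonal:
  fixes g :: "'i \<Rightarrow> 'a::complex_inner"
  assumes "\<And>i j. i \<in> F \<Longrightarrow> j \<in> F \<Longrightarrow> i \<noteq> j \<Longrightarrow> cinner (g i) (g j) = 0"
  shows "(norm (sum g F))\<^sup>2 = (\<Sum>i\<in>F. (norm (g i))\<^sup>2)"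
proof (cases "finite F")
  case True
  have "cinner (sum g F) (sum g F) = (\<Sum>j\<in>F. \<Sum>i\<in>F. cinner (g i) (g j))"
    by (simp add: cinner_sum_left cinner_sum_right)
  also have "\<dots> = (\<Sum>j\<in>F. \<Sum>i\<in>F. if i = j then cinner (g j) (g j) else 0)"
    by (intro sum.cong refl) (use assms in auto)
  also have "\<dots> = (\<Sum>j\<in>F. cinner (g j) (g j))"
    using True by simp
  finally show ?thesis by (simp add: power2_norm_eq_cinner)
qed simp

lemma summable_on_if_tails_small:
  fixes f :: "'i \<Rightarrow> 'a::{real_normed_vector, complete_space}"
  assumes "\<And>e. e > 0 \<Longrightarrow> \<exists>F0. finite F0 \<and> F0 \<subseteq> A \<and> (\<forall>G. finite G \<and> G \<subseteq> A - F0 \<longrightarrow> norm (sum f G) < e)"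
  shows "f summable_on A"
proof -
  have "\<exists>P. eventually P (finite_subsets_at_top A) \<and> (\<forall>F F'. P F \<and> P F' \<longrightarrow> dist (sum f F) (sum f F') < e)"
    if "e > 0" for e
  proof -
    obtain F0 where "finite F0" "F0 \<subseteq> A"
      and small: "\<And>G. finite G \<Longrightarrow> G \<subseteq> A - F0 \<Longrightarrow> norm (sum f G) < e / 2"
      using assms[of "e / 2"] \<open>e > 0\<close> by auto
    define P where "P F \<longleftrightarrow> finite F \<and> F0 \<subseteq> F \<and> F \<subseteq> A" for F
    have "eventually P (finite_subsets_at_top A)"
      unfolding P_def eventually_finite_subsets_at_top using \<open>finite F0\<close> \<open>F0 \<subseteq> A\<close> by blast
    moreover have "dist (sum f F) (sum f F') < e" if "P F" "P F'" for F F'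
    proof -
      have "sum f F - sum f F' = sum f (F - F0) - sum f (F' - F0)"
        using that by (simp add: P_def sum.subset_diff[of F0 F] sum.subset_diff[of F0 F'])
      then have "dist (sum f F) (sum f F') \<le> norm (sum f (F - F0)) + norm (sum f (F' - F0))"
        by (simp add: dist_norm norm_triangle_ineq4)
      also have "\<dots> < e / 2 + e / 2"
        using that by (intro add_strict_mono small) (auto simp: P_def)
      finally show ?thesis by simp
    qed
    ultimately show ?thesis by blast
  qed
  then have "cauchy_filter (filtermap (sum f) (finite_subsets_at_top A))"
    by (simp add: cauchy_filter_metric_filtermap)
  moreover have "complete (UNIV :: 'a set)"
    by (meson Cauchy_convergent UNIV_I complete_def convergent_def)
  ultimately obtain L where "(sum f \<longlongrightarrow> L) (finite_subsets_at_top A)"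
    using complete_uniform[where S=UNIV] by (force simp add: filterlim_def)
  then show ?thesis by (auto simp: summable_on_def has_sum_def)
qed

lemma orthogonal_summable:
  fixes g :: "'i \<Rightarrow> 'a::chilbert_space"
  assumes orth: "\<And>i j. i \<noteq> j \<Longrightarrow> cinner (g i) (g j) = 0"
    and "(\<lambda>i. (norm (g i))\<^sup>2) summable_on A"
  shows "g summable_on A"
proof (rule summable_on_if_tails_small)
  fix e :: real assume "e > 0"
  define h where "h = (\<lambda>i. (norm (g i))\<^sup>2)"
  have "h summable_on A" using assms(2) by (simp add: h_def)
  then obtain S where S: "(h has_sum S) A" unfolding summable_on_def by blast
  obtain F0 where F0: "finite F0" "F0 \<subseteq> A" "dist (sum h F0) S \<le> (e / 2)\<^sup>2"
    using has_sum_finite_approximation[OF S, of "(e / 2)\<^sup>2"] \<open>e > 0\<close> by auto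
  have "norm (sum g G) < e" if "finite G" "G \<subseteq> A - F0" for G
  proof -
    have "sum h F0 + sum h G = sum h (F0 \<union> G)"
      using that F0 by (subst sum.union_disjoint) auto
    also have "\<dots> \<le> S"
      by (rule finite_sum_le_has_sum[OF S]) (use that F0 in \<open>auto simp: h_def\<close>)
    finally have "sum h G \<le> (e / 2)\<^sup>2"
      using F0(3) by (simp add: dist_real_def)
    moreover have "(norm (sum g G))\<^sup>2 = sum h G"
      unfolding h_def by (rule norm_sum_orthogonal) (use orth in auto)
    ultimately have "(norm (sum g G))\<^sup>2 \<le> (e / 2)\<^sup>2" by simp
    then have "norm (sum g G) \<le> e / 2" by (rule power2_le_imp_le) (use \<open>e > 0\<close> in simp)
    then show ?thesis using \<open>e > 0\<close> by linarith
  qed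
  then show "\<exists>F0. finite F0 \<and> F0 \<subseteq> A \<and> (\<forall>G. finite G \<and> G \<subseteq> A - F0 \<longrightarrow> norm (sum g G) < e)"
    using F0 by blast
qed

lemma has_sum_norm_orthogonal:
  fixes g :: "'i \<Rightarrow> 'a::chilbert_space"
  assumes orth: "\<And>i j. i \<noteq> j \<Longrightarrow> cinner (g i) (g j) = 0"
    and "(\<lambda>i. (norm (g i))\<^sup>2) summable_on A"
  shows "((\<lambda>i. (norm (g i))\<^sup>2) has_sum (norm (infsum g A))\<^sup>2) A"
proof -
  have "(sum g \<longlongrightarrow> infsum g A) (finite_subsets_at_top A)"
    using orthogonal_summable[OF assms] by (rule infsum_tendsto)
  then have "((\<lambda>F. (norm (sum g F))\<^sup>2) \<longlongrightarrow> (norm (infsum g A))\<^sup>2) (finite_subsets_at_top A)"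
    by (intro tendsto_intros)
  moreover have "(norm (sum g F))\<^sup>2 = (\<Sum>i\<in>F. (norm (g i))\<^sup>2)" for F
    by (rule norm_sum_orthogonal) (use orth in auto)
  ultimately show ?thesis unfolding has_sum_def by simp
qed

lemma has_sum_delta: "((\<lambda>j. if j = k then c else 0) has_sum c) UNIV"
proof -
  have "((\<lambda>j. if j = k then c else 0) has_sum c) {k}"
    using has_sum_finite[of "{k}" "\<lambda>j. if j = k then c else 0"] by simp
  then show ?thesis by (rule has_sum_cong_neutral[THEN iffD1, rotated -1]) auto
qed

lemma hardy2_LD:
  assumes "f \<in> hardy2_L S"
  shows "f k \<in> S" and "(\<lambda>k. (norm (f k))\<^sup>2) summable_on UNIV"
  using assms unfolding hardy2_L_def by blast+

lemma csubspace_closure: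
  fixes S :: "'a::complex_inner set"
  assumes S: "csubspace S"
  shows "csubspace (closure S)"
proof -
  have translate: "(\<lambda>y. x + y) ` closure S \<subseteq> closure S" if "(\<lambda>y. x + y) ` S \<subseteq> closure S" for x
    by (rule image_closure_subset) (use that in \<open>auto intro: continuous_intros\<close>)
  have "x + y \<in> closure S" if "x \<in> closure S" "y \<in> closure S" for x y
  proof -
    have "a + y \<in> closure S" if "a \<in> S" for a
    proof -
      have "(\<lambda>y. a + y) ` S \<subseteq> closure S"
        using complex_vector.subspace_add[OF S that] closure_subset by blast
      then show ?thesis using translate[of a] \<open>y \<in> closure S\<close> by blast
    qed
    then show ?thesis
      using translate[of y] \<open>x \<in> closure S\<close> by (auto simp: add.commute)
  qed
  moreover have "scaleC c ` closure S \<subseteq> closure S" for c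
  proof (rule image_closure_subset)
    show "continuous_on (closure S) (scaleC c)"
      by (intro linear_continuous_on bounded_linear_scaleC_right)
    show "scaleC c ` S \<subseteq> closure S"
      using complex_vector.subspace_scale[OF S] closure_subset by blast
  qed simp
  moreover have "0 \<in> closure S" using S closure_subset complex_vector.subspace_0 by blast
  ultimately show ?thesis unfolding csubspace_def by blast
qed

lemma orthonormal_maximal_exists:
  "\<exists>B\<subseteq>L. orthonormal B \<and> (\<forall>B'. B \<subseteq> B' \<longrightarrow> B' \<subseteq> L \<longrightarrow> orthonormal B' \<longrightarrow> B' = B)"
proof -
  define \<A> where "\<A> = {B. B \<subseteq> L \<and> orthonormal B}"
  have "\<exists>M\<in>\<A>. \<forall>X\<in>\<A>. M \<subseteq> X \<longrightarrow> X = M"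
  proof (rule subset_Zorn')
    fix \<C> assume "subset.chain \<A> \<C>"
    then have sub: "\<C> \<subseteq> \<A>" and cmp: "\<forall>X\<in>\<C>. \<forall>Y\<in>\<C>. X \<subseteq> Y \<or> Y \<subseteq> X"
      by (auto simp: subset_chain_def)
    have "cinner b b' = 0" if b: "b \<in> \<Union>\<C>" and b': "b' \<in> \<Union>\<C>" and "b \<noteq> b'" for b b'
    proof -
      obtain X Y where "X \<in> \<C>" "b \<in> X" "Y \<in> \<C>" "b' \<in> Y" using b b' by blast
      with cmp obtain Z where "Z \<in> \<C>" "b \<in> Z" "b' \<in> Z" by blast
      then show ?thesis using sub \<open>b \<noteq> b'\<close> by (auto simp: \<A>_def orthonormal_def)
    qed
    then show "\<Union>\<C> \<in> \<A>" using sub by (auto simp: \<A>_def orthonormal_def)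
  qed
  then obtain B where "B \<in> \<A>" and "\<And>X. X \<in> \<A> \<Longrightarrow> B \<subseteq> X \<Longrightarrow> X = B"
    by blast
  then show ?thesis by (intro exI[of _ B]) (auto simp: \<A>_def)
qed

lemma maximal_orthonormal_is_onb:
  fixes L :: "'a::chilbert_space set"
  assumes L: "closed_csubspace L" and "B \<subseteq> L" "orthonormal B"
    and maximal: "\<And>B'. B \<subseteq> B' \<Longrightarrow> B' \<subseteq> L \<Longrightarrow> orthonormal B' \<Longrightarrow> B' = B"
  shows "is_onb L B"
proof -
  have "csubspace L" "closed L" using L by (auto simp: closed_csubspace_def)
  define M where "M = closure (cspan B)"
  have "closed_csubspace M"
    by (simp add: M_def closed_csubspace_def csubspace_closure)
  have "M \<subseteq> L"
    unfolding M_def using \<open>B \<subseteq> L\<close> \<open>csubspace L\<close> \<open>closed L\<close>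
    by (intro closure_minimal complex_vector.span_minimal)
  have "x \<in> M" if "x \<in> L" for x
  proof (rule ccontr)
    obtain p where "p \<in> M" and orth: "x - p \<in> orth_compl M"
      using orthogonal_decomposition[OF \<open>closed_csubspace M\<close>] by blast
    define z where "z = x - p"
    assume "x \<notin> M"
    then have "z \<noteq> 0" using \<open>p \<in> M\<close> by (auto simp: z_def)
    define u where "u = scaleC (complex_of_real (1 / norm z)) z"
    have "norm u = 1" using \<open>z \<noteq> 0\<close> by (simp add: u_def norm_scaleC norm_divide)
    have "u \<in> L"
      using \<open>csubspace L\<close> \<open>x \<in> L\<close> \<open>p \<in> M\<close> \<open>M \<subseteq> L\<close>
      by (auto simp: u_def z_def complex_vector.subspace_diff complex_vector.subspace_scale)
    have orth_u: "cinner b u = 0" if "b \<in> B" for b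
    proof -
      have "b \<in> M" using that complex_vector.span_base closure_subset unfolding M_def by blast
      then have "cinner b z = 0" using orth by (simp add: z_def orth_compl_def)
      then show ?thesis by (simp add: u_def cinner_scaleC_right)
    qed
    moreover have "cinner u b = 0" if "b \<in> B" for b
      by (subst cinner_zero_commute) (rule orth_u[OF that])
    ultimately have "orthonormal (insert u B)"
      using \<open>orthonormal B\<close> \<open>norm u = 1\<close> unfolding orthonormal_def by auto
    then have "u \<in> B" using maximal[of "insert u B"] \<open>B \<subseteq> L\<close> \<open>u \<in> L\<close> by blast
    then have "cinner u u = 0" by (rule orth_u)
    then show False using \<open>norm u = 1\<close> by (simp add: cinner_eq_zero_iff)
  qed
  then show ?thesis using \<open>M \<subseteq> L\<close> \<open>B \<subseteq> L\<close> \<open>orthonormal B\<close> by (auto simp: is_onb_def M_def)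
qed

lemma orthonormal_basis_exists:
  fixes L :: "'a::chilbert_space set"
  assumes "closed_csubspace L"
  shows "\<exists>B. is_onb L B"
  using orthonormal_maximal_exists[of L] maximal_orthonormal_is_onb[OF assms] by blast

definition reduces :: "'a::complex_inner set \<Rightarrow> ('a \<Rightarrow> 'a) \<Rightarrow> bool" where
  "reduces S T \<longleftrightarrow> (\<forall>x\<in>S. T x \<in> S) \<and> (\<forall>x\<in>S. adj T x \<in> S)"

lemma reduces_orth_compl:
  fixes T :: "'a::chilbert_space \<Rightarrow> 'a"
  assumes T: "bounded_clinear T" and "reduces S T"
  shows "reduces (orth_compl S) T"
proof -
  have "cinner s (T x) = 0" "cinner s (adj T x) = 0" if "s \<in> S" "x \<in> orth_compl S" for s x
  proof -
    have "adj T s \<in> S" "T s \<in> S" using \<open>reduces S T\<close> \<open>s \<in> S\<close> by (auto simp: reduces_def)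
    then show "cinner s (T x) = 0" "cinner s (adj T x) = 0"
      using \<open>x \<in> orth_compl S\<close>
      by (auto simp: orth_compl_def cinner_adj_left[OF T, symmetric] cinner_adj_right[OF T])
  qed
  then show ?thesis by (auto simp: reduces_def orth_compl_def)
qed

lemma adj_on_eq_adj:
  fixes T :: "'a::chilbert_space \<Rightarrow> 'a"
  assumes S: "csubspace S" and T: "bounded_clinear T"
    and invariant: "\<And>x. x \<in> S \<Longrightarrow> adj T x \<in> S" and "x \<in> S"
  shows "adj_on S T x = adj T x"
proof -
  have "(\<forall>x\<in>S. adj_on S T x \<in> S) \<and> (\<forall>x\<in>S. \<forall>y\<in>S. cinner (adj_on S T x) y = cinner x (T y))"
    unfolding adj_on_def by (rule someI[where x="adj T"]) (use invariant cinner_adj_left[OF T] in blast)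
  then have adj_on: "\<forall>x\<in>S. adj_on S T x \<in> S" "\<forall>x\<in>S. \<forall>y\<in>S. cinner (adj_on S T x) y = cinner x (T y)"
    by blast+
  show ?thesis
  proof (rule csubspace_cinner_ext[OF S])
    show "adj_on S T x \<in> S" "adj T x \<in> S" using adj_on(1) invariant \<open>x \<in> S\<close> by blast+
    show "cinner y (adj_on S T x) = cinner y (adj T x)" if "y \<in> S" for y
    proof -
      have "cinner (adj_on S T x) y = cinner (adj T x) y"
        using adj_on(2) \<open>x \<in> S\<close> that by (simp add: cinner_adj_left[OF T])
      then show ?thesis by (metis cinner_commute)
    qed
  qed
qed

lemma defect_on_eq_defect:
  fixes V1 V2 :: "'a::chilbert_space \<Rightarrow> 'a"
  assumes "csubspace S" "bounded_clinear V1" "bounded_clinear V2"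
    and "reduces S V1" "reduces S V2" and "x \<in> S"
  shows "defect_on S V1 V2 x = defect V1 V2 x"
proof -
  have "adj_on S V1 y = adj V1 y" "adj_on S V2 y = adj V2 y" if "y \<in> S" for y
    using assms that by (simp_all add: adj_on_eq_adj reduces_def)
  moreover have "adj V1 x \<in> S" using assms by (simp add: reduces_def)
  ultimately show ?thesis unfolding defect_on_def defect_def using \<open>x \<in> S\<close> by simp
qed

definition is_orth_proj :: "('a::complex_inner \<Rightarrow> 'a) \<Rightarrow> bool" where
  "is_orth_proj P \<longleftrightarrow> (\<forall>x. P (P x) = P x) \<and> (\<forall>x y. cinner (P x) y = cinner x (P y))"

lemma orth_proj_idem: "is_orth_proj P \<Longrightarrow> P (P x) = P x"
  unfolding is_orth_proj_def by blast

lemma orth_proj_selfadjoint: "is_orth_proj P \<Longrightarrow> cinner (P x) y = cinner x (P y)"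
  unfolding is_orth_proj_def by blast

lemma orth_proj_bounded_clinear:
  assumes P: "is_orth_proj P"
  shows "bounded_clinear P"
proof -
  have "P (x + y) = P x + P y" for x y
    by (rule cinner_ext) (simp add: orth_proj_selfadjoint[OF P] cinner_add_left)
  moreover have "P (scaleC c x) = scaleC c (P x)" for c x
    by (rule cinner_ext) (simp add: orth_proj_selfadjoint[OF P] cinner_scaleC_left)
  moreover have "norm (P x) \<le> norm x * 1" for x
  proof -
    have "(norm (P x))\<^sup>2 = Re (cinner x (P x))"
      by (simp add: power2_norm_eq_cinner orth_proj_selfadjoint[OF P] orth_proj_idem[OF P])
    also have "\<dots> \<le> norm x * norm (P x)"
      using complex_Re_le_cmod Cauchy_Schwarz_cinner order_trans by blast
    finally show ?thesis by (cases "P x = 0") (simp_all add: power2_eq_square)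
  qed
  ultimately show ?thesis unfolding bounded_clinear_def by blast
qed

lemma orth_proj_range:
  assumes P: "is_orth_proj P"
  shows "range P = {x. P x = x}" and "closed_csubspace (range P)"
proof -
  show range: "range P = {x. P x = x}"
    using orth_proj_idem[OF P] by (auto intro: range_eqI[of _ P, OF sym])
  have "bounded_clinear P" by (rule orth_proj_bounded_clinear[OF P])
  then have "closed {x. P x = x}"
    by (intro closed_Collect_eq) (auto intro: linear_continuous_on bounded_clinear_bounded_linear)
  moreover have "csubspace {x. P x = x}"
    using \<open>bounded_clinear P\<close> unfolding csubspace_def
    by (simp add: bounded_clinear_zero bounded_clinear_add bounded_clinear_scaleC)
  ultimately show "closed_csubspace (range P)" by (simp add: range closed_csubspace_def)
qed

lemma orth_proj_id: "is_orth_proj (\<lambda>x. x)"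
  unfolding is_orth_proj_def by simp

lemma orth_proj_complement:
  assumes P: "is_orth_proj P"
  shows "is_orth_proj (\<lambda>x. x - P x)"
  using orth_proj_idem[OF P] orth_proj_selfadjoint[OF P]
    bounded_clinear_diff[OF orth_proj_bounded_clinear[OF P]]
  unfolding is_orth_proj_def by (simp add: cinner_diff_left cinner_diff_right)

lemma orth_proj_isometry_conj:
  fixes V :: "'a::chilbert_space \<Rightarrow> 'a"
  assumes V: "isometry V" and P: "is_orth_proj P"
  shows "is_orth_proj (\<lambda>x. V (P (adj V x)))"
proof -
  have V': "bounded_clinear V" by (rule isometry_bounded_clinear[OF V])
  have "cinner (V (P (adj V x))) y = cinner x (V (P (adj V y)))" for x y
    by (simp add: cinner_adj_right[OF V', symmetric] cinner_adj_left[OF V'] orth_proj_selfadjoint[OF P])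
  then show ?thesis
    unfolding is_orth_proj_def by (simp add: adj_isometry_cancel[OF V] orth_proj_idem[OF P])
qed

lemma orth_proj_diff:
  assumes P: "is_orth_proj P" and Q: "is_orth_proj Q"
    and nonneg: "positive_op (\<lambda>x. P x - Q x)"
  shows "P (Q x) = Q x" and "is_orth_proj (\<lambda>x. P x - Q x)"
proof -
  have P_diff: "P (x - y) = P x - P y" and Q_diff: "Q (x - y) = Q x - Q y" for x y
    using P Q by (simp_all add: bounded_clinear_diff orth_proj_bounded_clinear)
  have Q_kernel: "Q x = 0" if "P x = 0" for x
  proof -
    have "cinner x (P x - Q x) = - cinner (Q x) (Q x)"
      using that by (simp add: cinner_diff_right cinner_minus_right orth_proj_selfadjoint[OF Q] orth_proj_idem[OF Q])
    then have "(norm (Q x))\<^sup>2 \<le> 0"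
      using nonneg unfolding positive_op_def by (metis neg_0_le_iff_le power2_norm_eq_cinner uminus_complex.sel(1))
    then show ?thesis by simp
  qed
  have QP: "Q (P x) = Q x" for x
    using Q_kernel[of "x - P x"] by (simp add: P_diff Q_diff orth_proj_idem[OF P])
  show PQ: "P (Q x) = Q x" for x
    by (rule cinner_ext) (simp add: orth_proj_selfadjoint[OF P] orth_proj_selfadjoint[OF Q] QP)
  show "is_orth_proj (\<lambda>x. P x - Q x)"
    unfolding is_orth_proj_def
    by (simp add: P_diff Q_diff PQ QP orth_proj_idem[OF P] orth_proj_idem[OF Q]
        cinner_diff_left cinner_diff_right orth_proj_selfadjoint[OF P] orth_proj_selfadjoint[OF Q])
qed

locale commuting_isometries =
  fixes V1 V2 :: "'a::chilbert_space \<Rightarrow> 'a"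
  assumes isometry_V1: "isometry V1" and isometry_V2: "isometry V2"
    and commute: "V1 \<circ> V2 = V2 \<circ> V1"
begin

lemma bounded_clinear_V1: "bounded_clinear V1"
  using isometry_V1 by (rule isometry_bounded_clinear)

lemma bounded_clinear_V2: "bounded_clinear V2"
  using isometry_V2 by (rule isometry_bounded_clinear)

lemma V1_V2: "V1 (V2 x) = V2 (V1 x)"
  using fun_cong[OF commute, of x] by simp

lemma swap: "commuting_isometries V2 V1"
  by unfold_locales (simp_all add: isometry_V1 isometry_V2 commute)

lemma defect_swap: "defect V2 V1 = defect V1 V2"
proof -
  have "adj V1 (adj V2 x) = adj V2 (adj V1 x)" for x
    by (rule adj_commute[OF bounded_clinear_V1 bounded_clinear_V2 V1_V2])
  then show ?thesis unfolding defect_def by (auto simp: V1_V2 algebra_simps)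
qed

lemma defect_eq_diff:
  "defect V1 V2 x = (x - V2 (adj V2 x)) - V1 (adj V1 x - V2 (adj V2 (adj V1 x)))"
  by (simp add: defect_def bounded_clinear_diff[OF bounded_clinear_V1])

definition Vpow :: "nat \<times> nat \<Rightarrow> 'a \<Rightarrow> 'a" where
  "Vpow k x = (V1 ^^ fst k) ((V2 ^^ snd k) x)"

lemma Vpow_0_0 [simp]: "Vpow (0, 0) x = x"
  by (simp add: Vpow_def)

lemma Vpow_Suc1: "Vpow (Suc m, n) x = V1 (Vpow (m, n) x)"
  by (simp add: Vpow_def)

lemma Vpow_Suc2: "Vpow (m, Suc n) x = V2 (Vpow (m, n) x)"
proof -
  have "(V1 ^^ m) (V2 y) = V2 ((V1 ^^ m) y)" for y
    by (induction m) (simp_all add: V1_V2)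
  then show ?thesis by (simp add: Vpow_def)
qed

lemma norm_Vpow: "norm (Vpow k x) = norm x"
  by (simp add: Vpow_def norm_funpow_isometry isometry_V1 isometry_V2)

definition Vpow_adj :: "nat \<times> nat \<Rightarrow> 'a \<Rightarrow> 'a" where
  "Vpow_adj k x = (adj V2 ^^ snd k) ((adj V1 ^^ fst k) x)"

lemma cinner_Vpow_left: "cinner (Vpow k u) x = cinner u (Vpow_adj k x)"
  by (simp add: Vpow_def Vpow_adj_def cinner_funpow_adj bounded_clinear_V1 bounded_clinear_V2)

lemma bounded_clinear_Vpow_adj: "bounded_clinear (Vpow_adj k)"
  using bounded_clinear_compose[OF bounded_clinear_funpow bounded_clinear_funpow,
      OF bounded_clinear_adj bounded_clinear_adj, OF bounded_clinear_V2 bounded_clinear_V1]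
  by (simp add: Vpow_adj_def[abs_def])

end

locale positive_defect = commuting_isometries +
  assumes defect_nonneg: "positive_op (defect V1 V2)"
begin

abbreviation C :: "'a \<Rightarrow> 'a" where "C \<equiv> defect V1 V2"

lemma
  shows orth_proj_defect: "is_orth_proj C"
    and adj_V2_defect: "adj V2 (C x) = 0"
    and adj_V2_V1_eq_0: "adj V2 u = 0 \<Longrightarrow> adj V2 (V1 u) = 0"
proof -
  define R where "R x = x - V2 (adj V2 x)" for x
  define Q where "Q x = V1 (R (adj V1 x))" for x
  have R: "is_orth_proj R"
    unfolding R_def using orth_proj_complement[OF orth_proj_isometry_conj[OF isometry_V2 orth_proj_id]] .
  have Q: "is_orth_proj Q"
    unfolding Q_def by (rule orth_proj_isometry_conj[OF isometry_V1 R])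
  have C_eq: "C = (\<lambda>x. R x - Q x)"
    by (simp add: fun_eq_iff R_def Q_def defect_eq_diff)
  have "positive_op (\<lambda>x. R x - Q x)" using defect_nonneg C_eq by simp
  note RQ = orth_proj_diff[OF R Q this]
  show "is_orth_proj C" using RQ(2) C_eq by simp
  have adj_R: "adj V2 (R y) = 0" for y
    by (simp add: R_def bounded_clinear_diff[OF bounded_clinear_adj[OF bounded_clinear_V2]]
        adj_isometry_cancel[OF isometry_V2])
  have "C x = R x - R (Q x)" using C_eq RQ(1) by simp
  then show "adj V2 (C x) = 0"
    by (simp add: adj_R bounded_clinear_diff[OF bounded_clinear_adj[OF bounded_clinear_V2]])
  assume "adj V2 u = 0"
  then have "Q (V1 u) = V1 u"
    by (simp add: Q_def R_def adj_isometry_cancel[OF isometry_V1] bounded_clinear_zero[OF bounded_clinear_V2])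
  then have "R (V1 u) = V1 u" using RQ(1)[of "V1 u"] by simp
  then show "adj V2 (V1 u) = 0" using adj_R[of "V1 u"] by simp
qed

lemma positive_defect_swap: "positive_defect V2 V1"
  using swap defect_nonneg defect_swap
  by (simp add: positive_defect_def positive_defect_axioms_def)

lemma adj_V1_defect: "adj V1 (C x) = 0"
  using positive_defect.adj_V2_defect[OF positive_defect_swap, of x] by (simp add: defect_swap)

lemma adj_V1_V2_eq_0: "adj V1 u = 0 \<Longrightarrow> adj V1 (V2 u) = 0"
  by (rule positive_defect.adj_V2_V1_eq_0[OF positive_defect_swap])

end

section \<open>The wandering subspace ran C\<close>

context positive_defect
begin

abbreviation L :: "'a set" where "L \<equiv> range C"

lemma defect_fixes_range: "a \<in> L \<Longrightarrow> C a = a"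
  using orth_proj_range(1)[OF orth_proj_defect] by auto

lemma closed_csubspace_range: "closed_csubspace L"
  by (rule orth_proj_range(2)[OF orth_proj_defect])

lemma zero_in_range: "0 \<in> L"
  using bounded_clinear_zero[OF orth_proj_bounded_clinear[OF orth_proj_defect]] by (metis rangeI)

lemma adj_V1_range: "a \<in> L \<Longrightarrow> adj V1 a = 0"
  using adj_V1_defect by auto

lemma adj_V2_range: "a \<in> L \<Longrightarrow> adj V2 a = 0"
  using adj_V2_defect by auto

lemma adj_V1_Vpow: "a \<in> L \<Longrightarrow> adj V1 (Vpow (m, n) a) = (if m = 0 then 0 else Vpow (m - 1, n) a)"
proof (cases m)
  case 0
  assume "a \<in> L"
  then have "adj V1 ((V2 ^^ n) a) = 0"
    by (induction n) (simp_all add: adj_V1_range adj_V1_V2_eq_0)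
  then show ?thesis using 0 by (simp add: Vpow_def)
qed (simp add: Vpow_Suc1 adj_isometry_cancel[OF isometry_V1])

lemma adj_V2_Vpow: "a \<in> L \<Longrightarrow> adj V2 (Vpow (m, n) a) = (if n = 0 then 0 else Vpow (m, n - 1) a)"
proof (cases n)
  case 0
  assume "a \<in> L"
  then have "adj V2 ((V1 ^^ m) a) = 0"
    by (induction m) (simp_all add: adj_V2_range adj_V2_V1_eq_0)
  then show ?thesis using 0 by (simp add: Vpow_def)
qed (simp add: Vpow_Suc2 adj_isometry_cancel[OF isometry_V2])

lemma cinner_Vpow_range:
  assumes "b \<in> L"
  shows "cinner (Vpow k a) b = (if k = (0, 0) then cinner a b else 0)"
proof -
  obtain m n where k: "k = (m, n)" by fastforce
  have "cinner (Vpow (Suc m, n) a) b = 0" for m n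
    using assms by (simp add: Vpow_Suc1 cinner_adj_right[OF bounded_clinear_V1, symmetric] adj_V1_range)
  moreover have "cinner (Vpow (m, Suc n) a) b = 0" for m n
    using assms by (simp add: Vpow_Suc2 cinner_adj_right[OF bounded_clinear_V2, symmetric] adj_V2_range)
  ultimately show ?thesis
    unfolding k by (cases m; cases n) simp_all
qed

lemma cinner_Vpow:
  assumes "a \<in> L" "b \<in> L"
  shows "cinner (Vpow k a) (Vpow (p, q) b) = (if k = (p, q) then cinner a b else 0)"
proof (induction p arbitrary: k)
  case 0
  show ?case
  proof (induction q arbitrary: k)
    case 0
    show ?case using cinner_Vpow_range[OF assms(2)] by simp
  next
    case (Suc q)
    obtain m n where k: "k = (m, n)" by fastforce
    have "cinner (Vpow k a) (Vpow (0, Suc q) b) = cinner (adj V2 (Vpow k a)) (Vpow (0, q) b)"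
      by (simp add: Vpow_Suc2 cinner_adj_left[OF bounded_clinear_V2])
    then show ?case
      using Suc.IH[of "(m, n - 1)"] adj_V2_Vpow[OF assms(1), of m n] by (cases n) (simp_all add: k)
  qed
next
  case (Suc p)
  obtain m n where k: "k = (m, n)" by fastforce
  have "cinner (Vpow k a) (Vpow (Suc p, q) b) = cinner (adj V1 (Vpow k a)) (Vpow (p, q) b)"
    by (simp add: Vpow_Suc1 cinner_adj_left[OF bounded_clinear_V1])
  then show ?case
    using Suc.IH[of "(m - 1, n)"] adj_V1_Vpow[OF assms(1), of m n] by (cases m) (simp_all add: k)
qed

lemma orthogonal_Vpow:
  "a \<in> L \<Longrightarrow> b \<in> L \<Longrightarrow> k \<noteq> j \<Longrightarrow> cinner (Vpow k a) (Vpow j b) = 0"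
  using cinner_Vpow[of a b k "fst j" "snd j"] by simp

section \<open>The model of H0 in the Hardy space\<close>

definition coeffs :: "'a \<Rightarrow> nat \<times> nat \<Rightarrow> 'a" where
  "coeffs x k = C (Vpow_adj k x)"

lemma coeffs_in_range: "coeffs x k \<in> L"
  by (simp add: coeffs_def)

lemma cinner_coeffs:
  assumes "a \<in> L"
  shows "cinner a (coeffs x k) = cinner (Vpow k a) x"
proof -
  have "cinner a (coeffs x k) = cinner (C a) (Vpow_adj k x)"
    by (simp add: coeffs_def orth_proj_selfadjoint[OF orth_proj_defect])
  also have "\<dots> = cinner (Vpow k a) x"
    by (simp add: defect_fixes_range[OF assms] cinner_Vpow_left)
  finally show ?thesis .
qed

lemma bounded_clinear_coeffs: "bounded_clinear (\<lambda>x. coeffs x k)"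
  using bounded_clinear_compose[OF orth_proj_bounded_clinear[OF orth_proj_defect] bounded_clinear_Vpow_adj]
  by (simp add: coeffs_def)

lemma coeffs_eqI:
  assumes "v \<in> L" and "\<And>a. a \<in> L \<Longrightarrow> cinner (Vpow k a) x = cinner a v"
  shows "coeffs x k = v"
proof (rule csubspace_cinner_ext)
  show "csubspace L"
    using closed_csubspace_range by (simp add: closed_csubspace_def)
qed (use assms coeffs_in_range in \<open>simp_all add: cinner_coeffs\<close>)

lemma coeffs_V1: "coeffs (V1 x) = Mz1 (coeffs x)"
proof
  fix k :: "nat \<times> nat"
  obtain m n where k: "k = (m, n)" by fastforce
  show "coeffs (V1 x) k = Mz1 (coeffs x) k"
  proof (rule coeffs_eqI)
    show "Mz1 (coeffs x) k \<in> L"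
      using coeffs_in_range zero_in_range by (simp add: Mz1_def k)
    fix a assume "a \<in> L"
    then show "cinner (Vpow k a) (V1 x) = cinner a (Mz1 (coeffs x) k)"
      by (simp add: k Mz1_def cinner_adj_left[OF bounded_clinear_V1, symmetric] adj_V1_Vpow cinner_coeffs)
  qed
qed

lemma coeffs_V2: "coeffs (V2 x) = Mz2 (coeffs x)"
proof
  fix k :: "nat \<times> nat"
  obtain m n where k: "k = (m, n)" by fastforce
  show "coeffs (V2 x) k = Mz2 (coeffs x) k"
  proof (rule coeffs_eqI)
    show "Mz2 (coeffs x) k \<in> L"
      using coeffs_in_range zero_in_range by (simp add: Mz2_def k)
    fix a assume "a \<in> L"
    then show "cinner (Vpow k a) (V2 x) = cinner a (Mz2 (coeffs x) k)"
      by (simp add: k Mz2_def cinner_adj_left[OF bounded_clinear_V2, symmetric] adj_V2_Vpow cinner_coeffs)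
  qed
qed

lemma sum_norm_coeffs_le: "(\<Sum>k\<in>F. (norm (coeffs x k))\<^sup>2) \<le> (norm x)\<^sup>2"
proof (cases "finite F")
  case True
  define s where "s = (\<Sum>k\<in>F. Vpow k (coeffs x k))"
  have "cinner (Vpow k (coeffs x k)) x = complex_of_real ((norm (coeffs x k))\<^sup>2)" for k
    by (simp add: cinner_coeffs[OF coeffs_in_range, symmetric] cinner_self)
  then have "Re (cinner s x) = (\<Sum>k\<in>F. (norm (coeffs x k))\<^sup>2)"
    by (simp add: s_def cinner_sum_left)
  moreover have "(norm s)\<^sup>2 = (\<Sum>k\<in>F. (norm (coeffs x k))\<^sup>2)"
    unfolding s_def by (subst norm_sum_orthogonal) (simp_all add: orthogonal_Vpow coeffs_in_range norm_Vpow)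
  moreover have "Re (cinner x s) = Re (cinner s x)"
    by (subst cinner_commute) simp
  ultimately show ?thesis
    using power2_norm_diff[of x s] zero_le_power2[of "norm (x - s)"] by linarith
qed simp

lemma coeffs_in_hardy: "coeffs x \<in> hardy2_L L"
proof -
  have "(\<lambda>k. (norm (coeffs x k))\<^sup>2) summable_on UNIV"
    by (rule nonneg_bdd_above_summable_on)
      (auto intro!: bdd_aboveI[where M="(norm x)\<^sup>2"] sum_norm_coeffs_le)
  then show ?thesis unfolding hardy2_L_def using coeffs_in_range by blast
qed

definition series :: "(nat \<times> nat \<Rightarrow> 'a) \<Rightarrow> 'a" where
  "series f = infsum (\<lambda>k. Vpow k (f k)) UNIV"

lemma
  assumes "f \<in> hardy2_L L"
  shows has_sum_series: "((\<lambda>k. Vpow k (f k)) has_sum series f) UNIV"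
    and has_sum_norm_series: "((\<lambda>k. (norm (f k))\<^sup>2) has_sum (norm (series f))\<^sup>2) UNIV"
proof -
  have orth: "cinner (Vpow i (f i)) (Vpow j (f j)) = 0" if "i \<noteq> j" for i j
    using that by (simp add: hardy2_LD(1)[OF assms] orthogonal_Vpow)
  have "(\<lambda>k. (norm (Vpow k (f k)))\<^sup>2) summable_on UNIV"
    using hardy2_LD(2)[OF assms] by (simp add: norm_Vpow)
  note summable = this
  show "((\<lambda>k. Vpow k (f k)) has_sum series f) UNIV"
    unfolding series_def using orthogonal_summable[OF orth summable] by (rule has_sum_infsum)
  show "((\<lambda>k. (norm (f k))\<^sup>2) has_sum (norm (series f))\<^sup>2) UNIV"
    using has_sum_norm_orthogonal[OF orth summable] by (simp add: norm_Vpow series_def)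
qed

lemma coeffs_series:
  assumes f: "f \<in> hardy2_L L"
  shows "coeffs (series f) = f"
proof
  fix k
  have "f j \<in> L" for j by (rule hardy2_LD(1)[OF f])
  show "coeffs (series f) k = f k"
  proof (rule coeffs_eqI)
    show "f k \<in> L" by fact
    fix a assume "a \<in> L"
    have "((\<lambda>j. cinner (Vpow k a) (Vpow j (f j))) has_sum cinner (Vpow k a) (series f)) UNIV"
      by (rule has_sum_bounded_linear[OF bounded_linear_cinner_right has_sum_series[OF f]])
    moreover have "(\<lambda>j. cinner (Vpow k a) (Vpow j (f j))) = (\<lambda>j. if j = k then cinner a (f k) else 0)"
      using cinner_Vpow[OF \<open>a \<in> L\<close> \<open>\<And>j. f j \<in> L\<close>] by (auto simp: fun_eq_iff)
    ultimately show "cinner (Vpow k a) (series f) = cinner a (f k)"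
      using has_sum_delta has_sum_unique by metis
  qed
qed

definition orbit :: "'a set" where
  "orbit = (\<Union>k. Vpow k ` L)"

text \<open>The double orthocomplement is the closed linear span of the orbit.\<close>

definition H0 :: "'a set" where
  "H0 = orth_compl (orth_compl orbit)"

lemma range_defect_subset_H0: "L \<subseteq> H0"
proof -
  have "L \<subseteq> orbit" unfolding orbit_def by (auto intro!: UN_I[of "(0, 0)"])
  then show ?thesis unfolding H0_def using subset_orth_compl_orth_compl by blast
qed

lemma series_in_H0:
  assumes f: "f \<in> hardy2_L L"
  shows "series f \<in> H0"
proof -
  have "cinner s (series f) = 0" if "s \<in> orth_compl orbit" for s
  proof -
    have "((\<lambda>j. cinner s (Vpow j (f j))) has_sum cinner s (series f)) UNIV"
      by (rule has_sum_bounded_linear[OF bounded_linear_cinner_right has_sum_series[OF f]])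
    moreover have "cinner s (Vpow j (f j)) = 0" for j
    proof -
      have "Vpow j (f j) \<in> orbit" using hardy2_LD(1)[OF f] unfolding orbit_def by blast
      then have "cinner (Vpow j (f j)) s = 0" using that by (simp add: orth_compl_def)
      then show ?thesis using cinner_zero_commute by blast
    qed
    then have "((\<lambda>j. cinner s (Vpow j (f j))) has_sum 0) UNIV" by simp
    ultimately show ?thesis by (rule has_sum_unique)
  qed
  then show ?thesis unfolding H0_def orth_compl_def by blast
qed

lemma series_coeffs:
  assumes x: "x \<in> H0"
  shows "series (coeffs x) = x"
proof -
  define z where "z = x - series (coeffs x)"
  have "z \<in> H0"
    using x series_in_H0[OF coeffs_in_hardy] orth_compl_closed_csubspace
    unfolding z_def H0_def closed_csubspace_def by (blast intro: complex_vector.subspace_diff)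
  have "coeffs z = (\<lambda>k. 0)"
    using bounded_clinear_diff[OF bounded_clinear_coeffs] coeffs_series[OF coeffs_in_hardy]
    by (simp add: z_def fun_eq_iff)
  then have "z \<in> orth_compl orbit"
    by (auto simp: orth_compl_def orbit_def cinner_coeffs[symmetric] fun_eq_iff)
  then have "z = 0" using \<open>z \<in> H0\<close> orth_compl_Int unfolding H0_def by blast
  then show ?thesis by (simp add: z_def)
qed

lemma unitary_onto_hardy_coeffs: "unitary_onto_hardy H0 L coeffs"
  unfolding unitary_onto_hardy_def
proof (intro conjI ballI allI)
  show "bij_betw coeffs H0 (hardy2_L L)"
  proof (rule bij_betw_byWitness[where f'=series])
    show "\<forall>x\<in>H0. series (coeffs x) = x" using series_coeffs by blast
    show "\<forall>f\<in>hardy2_L L. coeffs (series f) = f" using coeffs_series by blast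
    show "coeffs ` H0 \<subseteq> hardy2_L L" using coeffs_in_hardy by blast
    show "series ` hardy2_L L \<subseteq> H0" using series_in_H0 by blast
  qed
  show "coeffs (x + y) = (\<lambda>k. coeffs x k + coeffs y k)" for x y
    using bounded_clinear_add[OF bounded_clinear_coeffs] by auto
  show "coeffs (scaleC c x) = (\<lambda>k. scaleC c (coeffs x k))" for c x
    using bounded_clinear_scaleC[OF bounded_clinear_coeffs] by auto
  show "(norm x)\<^sup>2 = infsum (\<lambda>k. (norm (coeffs x k))\<^sup>2) UNIV" if "x \<in> H0" for x
    using infsumI[OF has_sum_norm_series[OF coeffs_in_hardy]] series_coeffs[OF that] by simp
qed

lemma reduces_orbit: "reduces orbit V1" "reduces orbit V2"
proof -
  have "V1 (Vpow (m, n) a) \<in> orbit" "V2 (Vpow (m, n) a) \<in> orbit"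
    "adj V1 (Vpow (m, n) a) \<in> orbit" "adj V2 (Vpow (m, n) a) \<in> orbit" if "a \<in> L" for m n a
  proof -
    have "Vpow (0, 0) 0 \<in> orbit" using zero_in_range unfolding orbit_def by blast
    then have "0 \<in> orbit" by simp
    then show "V1 (Vpow (m, n) a) \<in> orbit" "V2 (Vpow (m, n) a) \<in> orbit"
      "adj V1 (Vpow (m, n) a) \<in> orbit" "adj V2 (Vpow (m, n) a) \<in> orbit"
      using that by (auto simp: orbit_def adj_V1_Vpow adj_V2_Vpow Vpow_Suc1[symmetric] Vpow_Suc2[symmetric])
  qed
  then show "reduces orbit V1" "reduces orbit V2"
    unfolding reduces_def orbit_def by auto
qed

lemma reduces_H0: "reduces H0 V1" "reduces H0 V2"
  unfolding H0_def
  using reduces_orth_compl[OF bounded_clinear_V1] reduces_orth_compl[OF bounded_clinear_V2] reduces_orbit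
  by blast+

lemma defect_vanishes_orth_compl_H0:
  assumes "x \<in> orth_compl H0"
  shows "C x = 0"
proof -
  have "cinner (C x) x = 0"
    using assms range_defect_subset_H0 by (auto simp: orth_compl_def)
  then have "cinner (C x) (C x) = 0"
    by (simp add: orth_proj_selfadjoint[OF orth_proj_defect] orth_proj_idem[OF orth_proj_defect])
  then show ?thesis by (simp add: cinner_eq_zero_iff)
qed

lemma reduces_orth_compl_H0: "reduces (orth_compl H0) V1" "reduces (orth_compl H0) V2"
  using reduces_orth_compl[OF bounded_clinear_V1] reduces_orth_compl[OF bounded_clinear_V2] reduces_H0
  by blast+

lemma defect_on_orth_compl_H0:
  assumes "x \<in> orth_compl H0"
  shows "defect_on (orth_compl H0) V1 V2 x = 0"
proof -
  have "csubspace (orth_compl H0)"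
    using orth_compl_closed_csubspace[of H0] by (simp add: closed_csubspace_def)
  then show ?thesis
    using defect_on_eq_defect[OF _ bounded_clinear_V1 bounded_clinear_V2 reduces_orth_compl_H0 assms]
      defect_vanishes_orth_compl_H0[OF assms] by simp
qed

lemma range_defect_subset_ker: "L \<subseteq> {x. adj (V1 \<circ> V2) x = 0}"
  by (auto simp: adj_compose[OF bounded_clinear_V1 bounded_clinear_V2] adj_V1_defect
      bounded_clinear_zero[OF bounded_clinear_adj[OF bounded_clinear_V2]])

text \<open>For a \<noteq> 0 in L, V1 a lies in ker (V1 V2)^* but is orthogonal to L.\<close>

lemma range_defect_neq_ker:
  assumes "C \<noteq> (\<lambda>x. 0)"
  shows "L \<noteq> {x. adj (V1 \<circ> V2) x = 0}"
proof
  assume eq: "L = {x. adj (V1 \<circ> V2) x = 0}"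
  obtain x where "C x \<noteq> 0" using assms by (auto simp: fun_eq_iff)
  define a where "a = C x"
  have "a \<in> L" "a \<noteq> 0" using \<open>C x \<noteq> 0\<close> by (simp_all add: a_def)
  have "adj (V1 \<circ> V2) (V1 a) = 0"
    by (simp add: adj_compose[OF bounded_clinear_V1 bounded_clinear_V2]
        adj_isometry_cancel[OF isometry_V1] adj_V2_range[OF \<open>a \<in> L\<close>])
  then have "V1 a \<in> L" using eq by simp
  then have "cinner (V1 a) (V1 a) = 0"
    by (simp add: cinner_adj_right[OF bounded_clinear_V1, symmetric] adj_V1_range)
  then show False using \<open>a \<noteq> 0\<close> by (simp add: isometry_cinner[OF isometry_V1] cinner_eq_zero_iff)
qed

lemma same_hilbert_dim_range_defect: "same_hilbert_dim L (closure L)"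
proof -
  obtain B where "is_onb L B" using orthonormal_basis_exists[OF closed_csubspace_range] by blast
  moreover have "closure L = L"
    using closed_csubspace_range by (simp add: closed_csubspace_def)
  ultimately show ?thesis unfolding same_hilbert_dim_def using bij_betw_id by metis
qed

end

theorem theorem4p9:
  fixes V1 V2 :: "'a::chilbert_space \<Rightarrow> 'a"
  assumes "isometry V1" and "isometry V2"
    and "V1 \<circ> V2 = V2 \<circ> V1"
    and "positive_op (defect V1 V2)"
    and "defect V1 V2 \<noteq> (\<lambda>x. 0)"
  shows "\<exists>L H0 U.
           closed_csubspace L \<and> L \<noteq> {0} \<and>
           L \<subseteq> {x. adj (V1 \<circ> V2) x = 0} \<and> L \<noteq> {x. adj (V1 \<circ> V2) x = 0} \<and>
           closed_csubspace H0 \<and>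
           unitary_onto_hardy H0 L U \<and>
           V1 ` H0 \<subseteq> H0 \<and> V2 ` H0 \<subseteq> H0 \<and>
           V1 ` orth_compl H0 \<subseteq> orth_compl H0 \<and> V2 ` orth_compl H0 \<subseteq> orth_compl H0 \<and>
           (\<forall>x\<in>H0. U (V1 x) = Mz1 (U x) \<and> U (V2 x) = Mz2 (U x)) \<and>
           (\<forall>x\<in>orth_compl H0. defect_on (orth_compl H0) V1 V2 x = 0) \<and>
           same_hilbert_dim L (closure (range (defect V1 V2)))"
proof -
  interpret positive_defect V1 V2
    using assms(1-4) by unfold_locales
  have "L \<noteq> {0}" using assms(5) by auto
  then show ?thesis
    using closed_csubspace_range range_defect_subset_ker range_defect_neq_ker[OF assms(5)]
      unitary_onto_hardy_coeffs coeffs_V1 coeffs_V2 reduces_H0 reduces_orth_compl_H0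
      defect_on_orth_compl_H0 same_hilbert_dim_range_defect
    by (intro exI[of _ L] exI[of _ H0] exI[of _ coeffs])
      (auto simp: H0_def orth_compl_closed_csubspace reduces_def)
qed

end
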